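(* Let $\mathcal{M}\subseteq\mathbb{S}^n$. If $\mathcal{S}(\mathcal{M})$ is rank-one generated, then for all $B\in\mathbb{S}^n$, $$\mathrm{conv}\left(\{X\in\mathbb{S}^n:\ \langle M,X\rangle\ge0\ \forall M\in\mathcal{M},\ \langle B,X\rangle=1,\ X\succeq0,\ \mathrm{rank}(X)\le2\}\right)=\{X\in\mathbb{S}^n:\ \langle M,X\rangle\ge0\ \forall M\in\mathcal{M},\ \langle B,X\rangle=1,\ X\succeq0\}.$$ In particular, when $\mathcal{S}(\mathcal{M})$ is rank-one generated and $\mathcal{M}=\{M_1,\dots,M_m\}$, for any $M_0\in\mathbb{S}^n$ there exists a sequence of rank-two feasible solutions approaching the optimal value of $\inf\{\langle M_0,X\rangle: X\succeq0,\ \langle M_i,X\rangle\ge0\ \forall i\in\{1,\dots,m\},\ X_{1,1}=1\}$.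
   Context: $\mathbb{S}^n$ denotes real symmetric $n\times n$ matrices with $\langle A,B\rangle=\mathrm{tr}(AB)$, $\mathbb{S}^n_+$ the PSD cone, $X\succeq0$ means $X$ is PSD. For $\mathcal{M}\subseteq\mathbb{S}^n$, $\mathcal{S}(\mathcal{M})=\{X\in\mathbb{S}^n_+:\langle M,X\rangle\ge0\ \forall M\in\mathcal{M}\}$. A closed convex cone $\mathcal{S}\subseteq\mathbb{S}^n_+$ is rank-one generated (ROG) if $\mathcal{S}=\mathrm{conv}(\mathcal{S}\cap\{xx^\top:x\in\mathbb{R}^n\})$. *)

theory Defs
  imports "HOL-Analysis.Analysis"
begin

definition sym_mat :: "real^'n^'n \<Rightarrow> bool" where
  "sym_mat A \<longleftrightarrow> transpose A = A"

definition frob :: "real^'n^'n \<Rightarrow> real^'n^'n \<Rightarrow> real" where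
  "frob A B = trace (A ** B)"

definition psd :: "real^'n^'n \<Rightarrow> bool" where
  "psd A \<longleftrightarrow> sym_mat A \<and> (\<forall>x. 0 \<le> x \<bullet> (A *v x))"

definition outer :: "real^'n \<Rightarrow> real^'n^'n" where
  "outer x = (\<chi> i j. x$i * x$j)"

definition SM :: "(real^'n^'n) set \<Rightarrow> (real^'n^'n) set" where
  "SM Ms = {X. psd X \<and> (\<forall>M\<in>Ms. 0 \<le> frob M X)}"

definition ROG :: "(real^'n^'n) set \<Rightarrow> bool" where
  "ROG S \<longleftrightarrow> closed S \<and> convex S \<and> cone S \<and> S \<subseteq> {X. psd X} \<and>
     S = convex hull (S \<inter> range outer)"

end

theory Submission
  imports Defs
begin

(* Since S(M) is rank-one generated, every feasible X is a nonnegative combination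
   X = sum_k c_k x_k x_k^T of rank-one matrices in S(M), and the B-values b_k of the terms sum to 1.
   If there are at least three terms, X splits as X1 + X2 into two such combinations, each missing
   one term and each with positive B-value; then X is a convex combination of X1 and X2 rescaled to
   B-value 1, and induction on the number of terms leaves combinations of at most two rank-one
   matrices in S(M), i.e. feasible points of rank at most two. For the second claim, a linear
   function has the same infimum over a set as over its convex hull. *)

definition conic_combinations_le :: "nat \<Rightarrow> 'a::real_vector set \<Rightarrow> 'a set" where
  "conic_combinations_le n G =
     {\<Sum>v\<in>V. c v *\<^sub>R v | V c. finite V \<and> V \<subseteq> G \<and> card V \<le> n \<and> (\<forall>v\<in>V. 0 \<le> c v)}"

lemma convex_cone_nonneg_combination:
  assumes "convex_cone S" "finite V" "V \<subseteq> S" "\<forall>v\<in>V. 0 \<le> c v"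
  shows "(\<Sum>v\<in>V. c v *\<^sub>R v) \<in> S"
  using assms(2-)
  by (induction V rule: finite_induct)
     (auto intro: convex_cone_add convex_cone_scaleR convex_cone_contains_0 assms(1))

lemma conic_combinations_le_subset_convex_cone:
  assumes "convex_cone S" "G \<subseteq> S"
  shows "conic_combinations_le n G \<subseteq> S"
  unfolding conic_combinations_le_def
  using assms(2) by (auto intro!: convex_cone_nonneg_combination[OF assms(1)])

lemma exists_weight_strictly_between:
  fixes p q L :: real
  assumes "0 < L" "\<not> (p \<le> 0 \<and> L \<le> q)" "\<not> (q \<le> 0 \<and> L \<le> p)"
  obtains \<theta> where "0 \<le> \<theta>" "\<theta> \<le> 1"
    "0 < (1 - \<theta>) * q + \<theta> * (L - p)" "(1 - \<theta>) * q + \<theta> * (L - p) < L"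
proof (cases "0 < q \<and> q < L \<or> 0 < p \<and> p < L")
  case True
  then show ?thesis
    by (elim disjE) (auto intro: that[of 0] that[of 1])
next
  case False
  define d where "d = L - p - q"
  define \<theta> where "\<theta> = (L / 2 - q) / d"
  have "q \<le> 0 \<and> L \<le> d + q \<or> L \<le> q \<and> d + q \<le> 0"
    using False assms unfolding d_def by linarith
  then have "d \<noteq> 0" and \<theta>: "0 \<le> \<theta>" "\<theta> \<le> 1"
    using assms(1) by (auto simp: \<theta>_def divide_le_eq_1 zero_le_divide_iff)
  have "(1 - \<theta>) * q + \<theta> * (L - p) = q + \<theta> * d"
    by (simp add: d_def algebra_simps)
  also have "\<dots> = L / 2"
    using \<open>d \<noteq> 0\<close> by (simp add: \<theta>_def)
  finally have "(1 - \<theta>) * q + \<theta> * (L - p) = L / 2" .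
  then show ?thesis
    using assms(1) by (intro that[OF \<theta>]) auto
qed

lemma nonneg_combination_split:
  fixes \<phi> :: "'a::real_vector \<Rightarrow> real"
  assumes "linear \<phi>" "finite V" "3 \<le> card V" "\<forall>v\<in>V. 0 \<le> c v" "0 < \<phi> (\<Sum>v\<in>V. c v *\<^sub>R v)"
  obtains u v d e where "u \<in> V" "v \<in> V" "\<forall>k\<in>V. 0 \<le> d k \<and> 0 \<le> e k"
    "(\<Sum>k\<in>V. c k *\<^sub>R k) = (\<Sum>k\<in>V - {u}. d k *\<^sub>R k) + (\<Sum>k\<in>V - {v}. e k *\<^sub>R k)"
    "0 < \<phi> (\<Sum>k\<in>V - {u}. d k *\<^sub>R k)" "0 < \<phi> (\<Sum>k\<in>V - {v}. e k *\<^sub>R k)"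
proof -
  define L where "L = \<phi> (\<Sum>v\<in>V. c v *\<^sub>R v)"
  define b where "b k = c k * \<phi> k" for k
  obtain T where "T \<subseteq> V" "card T = 3"
    using assms(3) by (rule obtain_subset_with_card_n)
  then obtain x y z where xyz: "x \<in> V" "y \<in> V" "z \<in> V" "x \<noteq> y" "y \<noteq> z" "x \<noteq> z"
    unfolding card_3_iff by blast
  \<comment> \<open>The first part takes all of v, none of u and the fraction \<theta> of the other terms.
    A suitable \<theta> exists unless one of b u, b v is \<le> 0 and the other \<ge> L, and among three
    indices some pair avoids this.\<close>
  define bad where "bad p q \<longleftrightarrow> b p \<le> 0 \<and> L \<le> b q \<or> b q \<le> 0 \<and> L \<le> b p" for p q
  have "\<not> bad x y \<or> \<not> bad y z \<or> \<not> bad x z"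
    using assms(5) unfolding bad_def L_def by linarith
  then obtain u v where uv: "u \<in> V" "v \<in> V" "u \<noteq> v" and "\<not> bad u v"
    using xyz by blast
  then have good: "\<not> (b u \<le> 0 \<and> L \<le> b v)" "\<not> (b v \<le> 0 \<and> L \<le> b u)"
    unfolding bad_def by auto
  obtain \<theta> where \<theta>: "0 \<le> \<theta>" "\<theta> \<le> 1"
    and L1: "0 < (1 - \<theta>) * b v + \<theta> * (L - b u)" "(1 - \<theta>) * b v + \<theta> * (L - b u) < L"
    using exists_weight_strictly_between[OF _ good] assms(5) L_def by blast
  define W where "W = V - {u, v}"
  have W: "finite W" "u \<notin> W" "v \<notin> W"
    using assms(2) by (simp_all add: W_def)
  have V: "V - {u} = insert v W" "V - {v} = insert u W" "V = insert u (insert v W)"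
    using uv unfolding W_def by blast+
  define Y where "Y = (\<Sum>k\<in>W. c k *\<^sub>R k)"
  define d where "d k = (if k = v then c v else \<theta> * c k)" for k
  define e where "e k = (if k = u then c u else (1 - \<theta>) * c k)" for k
  have "(\<Sum>k\<in>W. d k *\<^sub>R k) = \<theta> *\<^sub>R Y" "(\<Sum>k\<in>W. e k *\<^sub>R k) = (1 - \<theta>) *\<^sub>R Y"
    unfolding Y_def scaleR_sum_right using W by (auto simp: d_def e_def intro!: sum.cong)
  then have X1: "(\<Sum>k\<in>V - {u}. d k *\<^sub>R k) = c v *\<^sub>R v + \<theta> *\<^sub>R Y"
    and X2: "(\<Sum>k\<in>V - {v}. e k *\<^sub>R k) = c u *\<^sub>R u + (1 - \<theta>) *\<^sub>R Y"
    using W uv unfolding V(1,2) by (simp_all add: d_def e_def)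
  have X: "(\<Sum>k\<in>V. c k *\<^sub>R k) = c u *\<^sub>R u + c v *\<^sub>R v + Y"
    using W uv by (subst V(3)) (simp add: Y_def)
  then have "L = b u + b v + \<phi> Y"
    by (simp add: L_def b_def linear_add[OF assms(1)] linear_scale[OF assms(1)])
  then have \<phi>X1: "\<phi> (c v *\<^sub>R v + \<theta> *\<^sub>R Y) = (1 - \<theta>) * b v + \<theta> * (L - b u)"
    and \<phi>X2: "\<phi> (c u *\<^sub>R u + (1 - \<theta>) *\<^sub>R Y) = L - ((1 - \<theta>) * b v + \<theta> * (L - b u))"
    by (simp_all add: b_def algebra_simps linear_add[OF assms(1)] linear_diff[OF assms(1)]
        linear_scale[OF assms(1)])
  have "\<forall>k\<in>V. 0 \<le> d k \<and> 0 \<le> e k"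
    using \<theta> assms(4) uv by (simp add: d_def e_def)
  then show ?thesis
  proof (rule that[OF uv(1,2)])
    show "(\<Sum>k\<in>V. c k *\<^sub>R k) = (\<Sum>k\<in>V - {u}. d k *\<^sub>R k) + (\<Sum>k\<in>V - {v}. e k *\<^sub>R k)"
      unfolding X X1 X2 by (simp add: algebra_simps)
    show "0 < \<phi> (\<Sum>k\<in>V - {u}. d k *\<^sub>R k)" "0 < \<phi> (\<Sum>k\<in>V - {v}. e k *\<^sub>R k)"
      unfolding X1 X2 \<phi>X1 \<phi>X2 using L1 by simp_all
  qed
qed

lemma normalized_conic_combination_in_convex_hull:
  fixes \<phi> :: "'a::real_vector \<Rightarrow> real"
  assumes "linear \<phi>" "finite V" "V \<subseteq> G" "\<forall>v\<in>V. 0 \<le> c v" "0 < \<phi> (\<Sum>v\<in>V. c v *\<^sub>R v)"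
  shows "(\<Sum>v\<in>V. c v *\<^sub>R v) /\<^sub>R \<phi> (\<Sum>v\<in>V. c v *\<^sub>R v)
           \<in> convex hull {x \<in> conic_combinations_le 2 G. \<phi> x = 1}"
  using assms(2-)
proof (induction "card V" arbitrary: V c rule: less_induct)
  case less
  let ?C = "convex hull {x \<in> conic_combinations_le 2 G. \<phi> x = 1}"
  define X where "X = (\<Sum>v\<in>V. c v *\<^sub>R v)"
  define L where "L = \<phi> X"
  show ?case
  proof (cases "card V \<le> 2")
    case True
    have "X /\<^sub>R L = (\<Sum>v\<in>V. (c v / L) *\<^sub>R v)"
      by (simp add: X_def scaleR_sum_right divide_inverse_commute)
    moreover have "(\<Sum>v\<in>V. (c v / L) *\<^sub>R v) \<in> conic_combinations_le 2 G"
      unfolding conic_combinations_le_def using less.prems True L_def X_def by fastforce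
    moreover have "\<phi> (X /\<^sub>R L) = 1"
      using less.prems(4) by (simp add: L_def X_def linear_scale[OF assms(1)])
    ultimately have "X /\<^sub>R L \<in> {x \<in> conic_combinations_le 2 G. \<phi> x = 1}"
      by simp
    then show ?thesis
      unfolding X_def L_def by (rule hull_inc)
  next
    case False
    then have "3 \<le> card V"
      by simp
    obtain u v d e where uv: "u \<in> V" "v \<in> V" and de: "\<forall>k\<in>V. 0 \<le> d k \<and> 0 \<le> e k"
      and X12: "X = (\<Sum>k\<in>V - {u}. d k *\<^sub>R k) + (\<Sum>k\<in>V - {v}. e k *\<^sub>R k)"
      and pos_sums: "0 < \<phi> (\<Sum>k\<in>V - {u}. d k *\<^sub>R k)" "0 < \<phi> (\<Sum>k\<in>V - {v}. e k *\<^sub>R k)"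
      unfolding X_def
      by (rule nonneg_combination_split[OF assms(1) less.prems(1) \<open>3 \<le> card V\<close> less.prems(3,4)])
    define X1 where "X1 = (\<Sum>k\<in>V - {u}. d k *\<^sub>R k)"
    define X2 where "X2 = (\<Sum>k\<in>V - {v}. e k *\<^sub>R k)"
    have C1: "X1 /\<^sub>R \<phi> X1 \<in> ?C"
      unfolding X1_def
      by (rule less.hyps) (use uv de pos_sums less.prems \<open>3 \<le> card V\<close> in auto)
    have C2: "X2 /\<^sub>R \<phi> X2 \<in> ?C"
      unfolding X2_def
      by (rule less.hyps) (use uv de pos_sums less.prems \<open>3 \<le> card V\<close> in auto)
    have X: "X = X1 + X2" and pos: "0 < \<phi> X1" "0 < \<phi> X2"
      using X12 pos_sums by (simp_all add: X1_def X2_def)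
    then have L: "L = \<phi> X1 + \<phi> X2"
      by (simp add: L_def linear_add[OF assms(1)])
    have "X /\<^sub>R L = (\<phi> X1 / L) *\<^sub>R (X1 /\<^sub>R \<phi> X1) + (\<phi> X2 / L) *\<^sub>R (X2 /\<^sub>R \<phi> X2)"
      using pos by (simp add: X scaleR_add_right inverse_eq_divide)
    also have "\<dots> \<in> ?C"
      by (rule convexD[OF convex_convex_hull C1 C2])
         (use pos L in \<open>simp_all add: add_divide_distrib[symmetric]\<close>)
    finally show ?thesis unfolding X_def L_def .
  qed
qed

lemma INF_convex_hull_linear:
  fixes f :: "'a::real_vector \<Rightarrow> real"
  assumes "linear f"
  shows "(INF x\<in>convex hull A. ereal (f x)) = (INF x\<in>A. ereal (f x))"
proof (rule antisym)
  show "(INF x\<in>convex hull A. ereal (f x)) \<le> (INF x\<in>A. ereal (f x))"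
    by (rule INF_superset_mono) (auto intro: hull_inc)
  let ?m = "INF x\<in>A. ereal (f x)"
  have "convex {y. ?m \<le> ereal y}"
    unfolding is_interval_convex_1[symmetric] is_interval_1 by (auto intro: order_trans)
  then have "convex (f -` {y. ?m \<le> ereal y})"
    by (rule convex_linear_vimage[OF assms])
  then have "convex hull A \<subseteq> f -` {y. ?m \<le> ereal y}"
    by (intro hull_minimal) (auto intro: INF_lower)
  then show "?m \<le> (INF x\<in>convex hull A. ereal (f x))"
    by (auto intro: INF_greatest)
qed

lemma exists_seq_tendsto_INF:
  fixes g :: "'a \<Rightarrow> ereal"
  assumes "A \<noteq> {}"
  obtains xs where "\<forall>k. xs k \<in> A" "(\<lambda>k. g (xs k)) \<longlonglongrightarrow> (INF x\<in>A. g x)"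
proof -
  obtain u where u: "\<forall>n. u n \<in> g ` A" "u \<longlonglongrightarrow> (INF x\<in>A. g x)"
    using Inf_as_limit[of "g ` A"] assms by auto
  then have "\<forall>n. \<exists>x. x \<in> A \<and> u n = g x"
    by blast
  then obtain xs where xs: "\<forall>n. xs n \<in> A \<and> u n = g (xs n)"
    by metis
  then have "(\<lambda>k. g (xs k)) = u"
    by auto
  then show thesis
    using that[of xs] xs u(2) by simp
qed

lemma linear_frob: "linear (frob A)"
  by (rule linearI)
     (simp_all add: frob_def trace_def matrix_matrix_mult_def distrib_left sum.distrib
       sum_distrib_left mult.left_commute)

lemma frob_outer_axis: "frob (outer (axis i 1)) X = X $ i $ i"
proof -
  have "outer (axis i 1) $ a $ k * X $ k $ a = (if a = i then if k = i then X $ i $ i else 0 else 0)"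
    for a k
    by (simp add: outer_def axis_def)
  moreover have "(\<Sum>k\<in>UNIV. if a = i then if k = i then X $ i $ i else 0 else 0)
      = (if a = i then X $ i $ i else 0)" for a
    by (cases "a = i") simp_all
  ultimately show ?thesis
    by (simp add: frob_def trace_def matrix_matrix_mult_def)
qed

lemma rank_sum_outer_le:
  fixes w :: "'i \<Rightarrow> real^'n"
  assumes "finite V"
  shows "rank (\<Sum>k\<in>V. c k *\<^sub>R outer (w k)) \<le> card V"
proof -
  have "(\<Sum>k\<in>V. c k *\<^sub>R outer (w k)) *v x = (\<Sum>k\<in>V. (c k * (w k \<bullet> x)) *\<^sub>R w k)" for x
    by (simp add: vec_eq_iff matrix_vector_mult_def outer_def inner_vec_def sum_distrib_left
        sum_distrib_right mult_ac sum.swap[of _ V])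
  then have "range (\<lambda>x. (\<Sum>k\<in>V. c k *\<^sub>R outer (w k)) *v x) \<subseteq> span (w ` V)"
    by (auto intro!: span_sum span_scale[OF span_base])
  then have "rank (\<Sum>k\<in>V. c k *\<^sub>R outer (w k)) \<le> card (w ` V)"
    unfolding rank_dim_range using assms by (auto intro: dim_le_card)
  also have "\<dots> \<le> card V"
    using assms by (rule card_image_le)
  finally show ?thesis .
qed

lemma rank_conic_combination_outer_le:
  assumes "G \<subseteq> range outer" "X \<in> conic_combinations_le n G"
  shows "rank X \<le> n"
proof -
  obtain V c where V: "finite V" "V \<subseteq> G" "card V \<le> n" and X: "X = (\<Sum>v\<in>V. c v *\<^sub>R v)"
    using assms(2) unfolding conic_combinations_le_def by blast
  obtain w where "\<forall>v\<in>V. v = outer (w v)"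
    using V(2) assms(1) by (metis f_inv_into_f subsetD)
  then have "X = (\<Sum>v\<in>V. c v *\<^sub>R outer (w v))"
    unfolding X by (intro sum.cong) auto
  then show ?thesis
    using rank_sum_outer_le[OF V(1)] V(3) by (metis order_trans)
qed

definition SM_slice :: "(real^'n^'n) set \<Rightarrow> real^'n^'n \<Rightarrow> (real^'n^'n) set" where
  "SM_slice Ms B = {X \<in> SM Ms. frob B X = 1}"

lemma ROG_convex_hull_rank_le_2_SM_slice:
  assumes "ROG (SM Ms)"
  shows "convex hull {X \<in> SM_slice Ms B. rank X \<le> 2} = SM_slice Ms B"
proof
  have rog: "convex (SM Ms)" "cone (SM Ms)" "SM Ms \<subseteq> convex hull (SM Ms \<inter> range outer)"
    using assms unfolding ROG_def by auto
  have "SM_slice Ms B = SM Ms \<inter> frob B -` {1}"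
    by (auto simp: SM_slice_def)
  then have "convex (SM_slice Ms B)"
    using rog(1) by (simp add: convex_Int convex_linear_vimage[OF linear_frob])
  then show "convex hull {X \<in> SM_slice Ms B. rank X \<le> 2} \<subseteq> SM_slice Ms B"
    by (intro hull_minimal) auto
  show "SM_slice Ms B \<subseteq> convex hull {X \<in> SM_slice Ms B. rank X \<le> 2}"
  proof
    fix X assume "X \<in> SM_slice Ms B"
    then have X: "X \<in> SM Ms" "frob B X = 1"
      by (auto simp: SM_slice_def)
    have "conic (SM Ms)"
      using rog(2) unfolding cone_def conic_def by blast
    with X(1) rog(1) have "convex_cone (SM Ms)"
      unfolding convex_cone_def by blast
    from X(1) rog(3) have "X \<in> convex hull (SM Ms \<inter> range outer)"
      by blast
    then obtain V c where V: "finite V" "V \<subseteq> SM Ms \<inter> range outer" "\<forall>v\<in>V. 0 \<le> c v"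
      and X_eq: "X = (\<Sum>v\<in>V. c v *\<^sub>R v)"
      unfolding convex_hull_explicit by blast
    have "X \<in> convex hull {Y \<in> conic_combinations_le 2 (SM Ms \<inter> range outer). frob B Y = 1}"
      using normalized_conic_combination_in_convex_hull[OF linear_frob[of B] V] X(2)
      by (simp add: X_eq)
    also have "\<dots> \<subseteq> convex hull {X \<in> SM_slice Ms B. rank X \<le> 2}"
    proof (intro hull_mono subsetI)
      fix Y assume Y: "Y \<in> {Y \<in> conic_combinations_le 2 (SM Ms \<inter> range outer). frob B Y = 1}"
      then have "Y \<in> SM Ms"
        using conic_combinations_le_subset_convex_cone[OF \<open>convex_cone (SM Ms)\<close>] by blast
      moreover have "rank Y \<le> 2"
        using Y rank_conic_combination_outer_le[of "SM Ms \<inter> range outer"] by blast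
      ultimately show "Y \<in> {X \<in> SM_slice Ms B. rank X \<le> 2}"
        using Y by (simp add: SM_slice_def)
    qed
    finally show "X \<in> convex hull {X \<in> SM_slice Ms B. rank X \<le> 2}" .
  qed
qed

lemma ROG_SM_slice_minimizing_sequence_rank_le_2:
  assumes "ROG (SM Ms)" "SM_slice Ms B \<noteq> {}"
  obtains Xs where "\<forall>k. Xs k \<in> SM_slice Ms B \<and> rank (Xs k) \<le> 2"
    "(\<lambda>k. ereal (frob M0 (Xs k))) \<longlonglongrightarrow> (INF X\<in>SM_slice Ms B. ereal (frob M0 X))"
proof -
  let ?T = "{X \<in> SM_slice Ms B. rank X \<le> 2}"
  have slice_eq: "SM_slice Ms B = convex hull ?T"
    using ROG_convex_hull_rank_le_2_SM_slice[OF assms(1)] by simp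
  then have "?T \<noteq> {}"
    using assms(2) by (metis convex_hull_empty)
  then obtain Xs where "\<forall>k. Xs k \<in> ?T"
    and "(\<lambda>k. ereal (frob M0 (Xs k))) \<longlonglongrightarrow> (INF X\<in>?T. ereal (frob M0 X))"
    by (rule exists_seq_tendsto_INF)
  moreover have "(INF X\<in>SM_slice Ms B. ereal (frob M0 X)) = (INF X\<in>?T. ereal (frob M0 X))"
    by (subst slice_eq) (rule INF_convex_hull_linear[OF linear_frob])
  ultimately show thesis
    using that by simp
qed

theorem lemma5p6:
  fixes Ms :: "(real^'n^'n) set"
  assumes "\<forall>M\<in>Ms. sym_mat M"
    and "ROG (SM Ms)"
  shows "(\<forall>B. sym_mat B \<longrightarrow>
            convex hull {X. sym_mat X \<and> (\<forall>M\<in>Ms. 0 \<le> frob M X) \<and> frob B X = 1 \<and> psd X \<and> rank X \<le> 2}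
          = {X. sym_mat X \<and> (\<forall>M\<in>Ms. 0 \<le> frob M X) \<and> frob B X = 1 \<and> psd X})
       \<and> (finite Ms \<longrightarrow>
            (\<forall>M0 i. sym_mat M0 \<longrightarrow>
              (let F = {X. psd X \<and> (\<forall>M\<in>Ms. 0 \<le> frob M X) \<and> X$i$i = 1} in
                F \<noteq> {} \<longrightarrow>
                (\<exists>Xs :: nat \<Rightarrow> real^'n^'n. (\<forall>k. Xs k \<in> F \<and> rank (Xs k) \<le> 2) \<and>
                   ((\<lambda>k. ereal (frob M0 (Xs k))) \<longlongrightarrow> (INF X\<in>F. ereal (frob M0 X))) sequentially))))"
proof (intro conjI allI impI)
  fix B :: "real^'n^'n"
  have "{X. sym_mat X \<and> (\<forall>M\<in>Ms. 0 \<le> frob M X) \<and> frob B X = 1 \<and> psd X \<and> rank X \<le> 2}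
      = {X \<in> SM_slice Ms B. rank X \<le> 2}"
    and "{X. sym_mat X \<and> (\<forall>M\<in>Ms. 0 \<le> frob M X) \<and> frob B X = 1 \<and> psd X} = SM_slice Ms B"
    by (auto simp: SM_slice_def SM_def psd_def)
  with ROG_convex_hull_rank_le_2_SM_slice[OF assms(2)]
  show "convex hull {X. sym_mat X \<and> (\<forall>M\<in>Ms. 0 \<le> frob M X) \<and> frob B X = 1 \<and> psd X \<and> rank X \<le> 2}
      = {X. sym_mat X \<and> (\<forall>M\<in>Ms. 0 \<le> frob M X) \<and> frob B X = 1 \<and> psd X}"
    by simp
next
  fix M0 :: "real^'n^'n" and i :: 'n
  have F_eq: "{X. psd X \<and> (\<forall>M\<in>Ms. 0 \<le> frob M X) \<and> X$i$i = 1} = SM_slice Ms (outer (axis i 1))"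
    by (auto simp: SM_slice_def SM_def frob_outer_axis)
  show "let F = {X. psd X \<and> (\<forall>M\<in>Ms. 0 \<le> frob M X) \<and> X$i$i = 1} in F \<noteq> {} \<longrightarrow>
      (\<exists>Xs. (\<forall>k. Xs k \<in> F \<and> rank (Xs k) \<le> 2) \<and>
        ((\<lambda>k. ereal (frob M0 (Xs k))) \<longlongrightarrow> (INF X\<in>F. ereal (frob M0 X))) sequentially)"
    unfolding Let_def F_eq
    using ROG_SM_slice_minimizing_sequence_rank_le_2[OF assms(2)] by metis
qed

end
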